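(* The quantity $c^*_\infty=c^*_\infty(d,D,f'(0),g'(0))$, viewed as a function of $(d,D,f'(0),g'(0))\in(0,\infty)^4$, satisfies: (i) $\max\{c_f,c_g\}\leq c^*_\infty\leq 2\sqrt{\max\{D,d\}\max\{g'(0),f'(0)\}}$, and the last inequality is strict if and only if either ($D>d$ and $f'(0)>g'(0)$) or ($D<d$ and $f'(0)<g'(0)$); (ii) $c^*_\infty$ is continuous; (iii) for fixed $d,f'(0),g'(0)$, the map $D\mapsto c^*_\infty(D)$ is non-decreasing; (iv) $\lim_{D\to+\infty}c^*_\infty(D)/\sqrt D\in(0,+\infty)$.
   Context: For $D,d>0$ and $f'(0),g'(0)>0$: $c_f:=2\sqrt{df'(0)}$, $c_g:=2\sqrt{Dg'(0)}$, and $c^*_\infty:=c_f$ if $\frac{D}{d}\leq2-\frac{g'(0)}{f'(0)}$; $c^*_\infty:=c_g$ if $\frac{d}{D}\leq 2-\frac{f'(0)}{g'(0)}$; $c^*_\infty:=\frac{|Df'(0)-dg'(0)|}{\sqrt{(D-d)(f'(0)-g'(0))}}$ otherwise. (This is the asymptotic speed of propagation of the two-half-space system $u_t-D\Delta u=g(u)$ in $\{x_N<0\}$, $v_t-d\Delta v=f(v)$ in $\{x_N>0\}$, with exchange conditions $D\partial_{x_N}u=\nu v-\mu u$, $-d\partial_{x_N}v=\mu u-\nu v$ on $\{x_N=0\}$.) *)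

theory Defs
  imports "HOL-Analysis.Analysis"
begin

text \<open>Here f0 stands for f'(0) and g0 for g'(0).\<close>

definition c_f :: "real \<Rightarrow> real \<Rightarrow> real" where
  "c_f d f0 = 2 * sqrt (d * f0)"

definition c_g :: "real \<Rightarrow> real \<Rightarrow> real" where
  "c_g D g0 = 2 * sqrt (D * g0)"

definition c_star_inf :: "real \<Rightarrow> real \<Rightarrow> real \<Rightarrow> real \<Rightarrow> real" where
  "c_star_inf d D f0 g0 =
     (if D / d \<le> 2 - g0 / f0 then c_f d f0
      else if d / D \<le> 2 - f0 / g0 then c_g D g0
      else \<bar>D * f0 - d * g0\<bar> / sqrt ((D - d) * (f0 - g0)))"

end

theory Submission
  imports Defs
begin

text \<open>
  The three cases in the definition of \<open>c_star_inf d D f0 g0\<close> are the three possible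
  positions (left endpoint, right endpoint, interior vertex) of the maximiser over \<open>[0, 1]\<close>
  of the quadratic \<open>t \<mapsto> ((1 - t) d + t D) ((1 - t) f0 + t g0)\<close>, the product of the
  interpolated diffusivity and growth rate; so \<open>c_star_inf\<^sup>2 / 4\<close> is its maximum.
  Everything follows from this variational formula: the endpoints give \<open>c_f\<close> and \<open>c_g\<close>;
  each factor is at most the larger of its endpoint values, and both bounds are attained at
  once exactly when the larger diffusivity and the larger growth rate sit at the same endpoint;
  the product increases with \<open>D\<close>; a maximum over a fixed compact set of a jointly continuous
  function depends continuously on the parameters; and the product divided by \<open>D\<close> tends to
  \<open>t ((1 - t) f0 + t g0)\<close> uniformly in \<open>t\<close>.
\<close>

lemma abs_SUP_diff_le:
  fixes f g :: "'a \<Rightarrow> real"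
  assumes "K \<noteq> {}" "bdd_above (f ` K)" "bdd_above (g ` K)" "\<And>t. t \<in> K \<Longrightarrow> \<bar>f t - g t\<bar> \<le> e"
  shows "\<bar>(SUP t\<in>K. f t) - (SUP t\<in>K. g t)\<bar> \<le> e"
proof -
  have "(SUP t\<in>K. f t) \<le> (SUP t\<in>K. g t) + e"
  proof (rule cSUP_least[OF assms(1)])
    fix t assume "t \<in> K"
    then show "f t \<le> (SUP t\<in>K. g t) + e"
      using assms(4)[of t] cSUP_upper[OF _ assms(3), of t] by linarith
  qed
  moreover have "(SUP t\<in>K. g t) \<le> (SUP t\<in>K. f t) + e"
  proof (rule cSUP_least[OF assms(1)])
    fix t assume "t \<in> K"
    then show "g t \<le> (SUP t\<in>K. f t) + e"
      using assms(4)[of t] cSUP_upper[OF _ assms(2), of t] by linarith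
  qed
  ultimately show ?thesis
    by linarith
qed

lemma continuous_on_SUP_compact:
  fixes f :: "'a::heine_borel \<Rightarrow> 'b::metric_space \<Rightarrow> real"
  assumes "open S" "compact K" "K \<noteq> {}" and cont: "continuous_on (S \<times> K) (\<lambda>(x, t). f x t)"
  shows "continuous_on S (\<lambda>x. SUP t\<in>K. f x t)"
  unfolding continuous_on_eq_continuous_at[OF \<open>open S\<close>]
proof
  fix x0 assume "x0 \<in> S"
  then obtain r where "r > 0" and ball: "cball x0 r \<subseteq> S"
    using \<open>open S\<close> open_contains_cball by blast
  have bdd: "bdd_above (f x ` K)" if "x \<in> S" for x
  proof -
    have "continuous_on K (\<lambda>t. (\<lambda>(x, t). f x t) (x, t))"
      using that by (intro continuous_on_compose2[OF cont]) (auto intro!: continuous_intros)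
    then show ?thesis
      using \<open>compact K\<close> by (simp add: bounded_imp_bdd_above compact_imp_bounded compact_continuous_image)
  qed
  have "uniformly_continuous_on (cball x0 r \<times> K) (\<lambda>(x, t). f x t)"
    using ball \<open>compact K\<close>
    by (intro compact_uniformly_continuous continuous_on_subset[OF cont] compact_Times) auto
  show "isCont (\<lambda>x. SUP t\<in>K. f x t) x0"
    unfolding continuous_at_eps_delta
  proof (intro allI impI)
    fix e :: real assume "e > 0"
    then obtain \<delta> where "\<delta> > 0" and \<delta>: "\<And>p q. p \<in> cball x0 r \<times> K \<Longrightarrow> q \<in> cball x0 r \<times> K \<Longrightarrow>
        dist q p < \<delta> \<Longrightarrow> dist ((\<lambda>(x, t). f x t) q) ((\<lambda>(x, t). f x t) p) < e / 2"
      using \<open>uniformly_continuous_on _ _\<close> unfolding uniformly_continuous_on_def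
      by (metis half_gt_zero)
    have "\<bar>(SUP t\<in>K. f y t) - (SUP t\<in>K. f x0 t)\<bar> < e" if "dist y x0 < min \<delta> r" for y
    proof -
      have "y \<in> S"
        using that ball by (auto simp: dist_commute)
      have "\<bar>f y t - f x0 t\<bar> \<le> e / 2" if "t \<in> K" for t
        using \<delta>[of "(x0, t)" "(y, t)"] \<open>dist y x0 < min \<delta> r\<close> \<open>r > 0\<close> that
        by (auto simp: dist_Pair_Pair dist_commute dist_real_def abs_minus_commute)
      then have "\<bar>(SUP t\<in>K. f y t) - (SUP t\<in>K. f x0 t)\<bar> \<le> e / 2"
        using \<open>y \<in> S\<close> \<open>x0 \<in> S\<close> by (intro abs_SUP_diff_le bdd \<open>K \<noteq> {}\<close>)
      with \<open>e > 0\<close> show ?thesis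
        by linarith
    qed
    then show "\<exists>d>0. \<forall>y. dist y x0 < d \<longrightarrow>
        dist (SUP t\<in>K. f y t) (SUP t\<in>K. f x0 t) < e"
      using \<open>\<delta> > 0\<close> \<open>r > 0\<close> by (auto simp: dist_real_def intro!: exI[of _ "min \<delta> r"])
  qed
qed

definition mixed_product :: "real \<Rightarrow> real \<Rightarrow> real \<Rightarrow> real \<Rightarrow> real \<Rightarrow> real" where
  "mixed_product d D f0 g0 t = ((1 - t) * d + t * D) * ((1 - t) * f0 + t * g0)"

lemma mixed_product_swap:
  "mixed_product d D f0 g0 t = mixed_product D d g0 f0 (1 - t)"
  by (simp add: mixed_product_def algebra_simps)

lemma mixed_product_nonneg:
  assumes "d \<ge> 0" "D \<ge> 0" "f0 \<ge> 0" "g0 \<ge> 0" "t \<in> {0..1}"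
  shows "mixed_product d D f0 g0 t \<ge> 0"
  using assms unfolding mixed_product_def by (intro mult_nonneg_nonneg add_nonneg_nonneg) auto

lemma mixed_product_le_left_endpoint:
  assumes "d > 0" "D > 0" "f0 > 0" "g0 > 0" "D * f0 + d * g0 \<le> 2 * d * f0" "t \<in> {0..1}"
  shows "mixed_product d D f0 g0 t \<le> d * f0"
proof -
  have "4 * (D * f0) * (d * g0) \<le> (D * f0 + d * g0)\<^sup>2"
    using sum_squares_ge_zero[of "D * f0 - d * g0" 0] by (simp add: power2_eq_square algebra_simps)
  also have "\<dots> \<le> (2 * d * f0)\<^sup>2"
    using assms by (intro power_mono) auto
  finally have "(d * f0) * (D * g0) \<le> (d * f0) * (d * f0)"
    by (simp add: power2_eq_square algebra_simps)
  hence "D * g0 \<le> d * f0"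
    using assms by (simp add: mult_le_cancel_left_pos)
  moreover have "mixed_product d D f0 g0 t - d * f0
      = t * ((1 - t) * (D * f0 + d * g0 - 2 * d * f0) + t * (D * g0 - d * f0))"
    by (simp add: mixed_product_def algebra_simps)
  ultimately show ?thesis
    using assms by (smt (verit) atLeastAtMost_iff mult_nonneg_nonpos mult_nonneg_nonneg)
qed

lemma mixed_product_interior_max:
  assumes "2 * d * f0 < D * f0 + d * g0" "2 * D * g0 < D * f0 + d * g0"
  defines "w \<equiv> (D - d) * (f0 - g0)"
  defines "t0 \<equiv> (D * f0 + d * g0 - 2 * d * f0) / (2 * w)"
  shows "w > 0" "t0 \<in> {0..1}"
    "mixed_product d D f0 g0 t0 = (D * f0 - d * g0)\<^sup>2 / (4 * w)"
    "mixed_product d D f0 g0 t \<le> (D * f0 - d * g0)\<^sup>2 / (4 * w)"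
proof -
  define u where "u = D * f0 + d * g0 - 2 * d * f0"
  have sum: "u + (D * f0 + d * g0 - 2 * D * g0) = 2 * w"
    by (simp add: u_def w_def algebra_simps)
  show w: "w > 0" "t0 \<in> {0..1}"
    using assms sum by (auto simp: t0_def u_def[symmetric] field_simps)
  have square: "(D * f0 - d * g0)\<^sup>2 - 4 * w * mixed_product d D f0 g0 s = (2 * w * s - u)\<^sup>2" for s
    by (simp add: mixed_product_def u_def w_def power2_eq_square algebra_simps)
  have "2 * w * t0 - u = 0"
    using w by (simp add: t0_def u_def)
  with square[of t0] w show "mixed_product d D f0 g0 t0 = (D * f0 - d * g0)\<^sup>2 / (4 * w)"
    by (simp add: field_simps)
  show "mixed_product d D f0 g0 t \<le> (D * f0 - d * g0)\<^sup>2 / (4 * w)"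
    using square[of t] w by (simp add: field_simps)
qed

lemma mixed_product_le_max:
  assumes "d \<ge> 0" "D \<ge> 0" "f0 \<ge> 0" "g0 \<ge> 0" "t \<in> {0..1}"
  shows "mixed_product d D f0 g0 t \<le> max D d * max g0 f0"
proof -
  have "(1 - t) * d + t * D \<le> (1 - t) * max D d + t * max D d"
    using assms by (intro add_mono mult_left_mono) auto
  moreover have "(1 - t) * f0 + t * g0 \<le> (1 - t) * max g0 f0 + t * max g0 f0"
    using assms by (intro add_mono mult_left_mono) auto
  moreover have "0 \<le> (1 - t) * f0 + t * g0"
    using assms by (intro add_nonneg_nonneg mult_nonneg_nonneg) auto
  ultimately show ?thesis
    using assms unfolding mixed_product_def
    by (intro mult_mono) (auto simp: algebra_simps)
qed

lemma mixed_product_less_max: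
  assumes "d < D" "g0 < f0" "d \<ge> 0" "g0 \<ge> 0" "t \<in> {0..1}"
  shows "mixed_product d D f0 g0 t < D * f0"
proof (cases "t = 1")
  case True
  then show ?thesis using assms by (simp add: mixed_product_def)
next
  case False
  with assms have "(1 - t) * (D - d) > 0" "t * (f0 - g0) \<ge> 0"
    by auto
  then have "(1 - t) * d + t * D < D" "(1 - t) * f0 + t * g0 \<le> f0"
    by (simp_all add: algebra_simps)
  moreover have "(1 - t) * f0 + t * g0 > 0"
    using assms False by (auto intro: add_pos_nonneg)
  ultimately show ?thesis
    unfolding mixed_product_def using assms
    by (smt (verit) mult_left_mono mult_strict_right_mono)
qed

lemma c_star_inf_attains_max:
  assumes "d > 0" "D > 0" "f0 > 0" "g0 > 0"
  obtains t0 where "t0 \<in> {0..1}"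
    "c_star_inf d D f0 g0 = 2 * sqrt (mixed_product d D f0 g0 t0)"
    "\<And>t. t \<in> {0..1} \<Longrightarrow> mixed_product d D f0 g0 t \<le> mixed_product d D f0 g0 t0"
proof -
  have case_f: "D / d \<le> 2 - g0 / f0 \<longleftrightarrow> D * f0 + d * g0 \<le> 2 * d * f0"
    using assms by (simp add: field_simps)
  have case_g: "d / D \<le> 2 - f0 / g0 \<longleftrightarrow> D * f0 + d * g0 \<le> 2 * D * g0"
    using assms by (simp add: field_simps)
  consider (f) "D * f0 + d * g0 \<le> 2 * d * f0"
    | (g) "\<not> D * f0 + d * g0 \<le> 2 * d * f0" "D * f0 + d * g0 \<le> 2 * D * g0"
    | (mixed) "2 * d * f0 < D * f0 + d * g0" "2 * D * g0 < D * f0 + d * g0"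
    by linarith
  then show thesis
  proof cases
    case f
    show thesis
    proof (rule that[of 0])
      show "c_star_inf d D f0 g0 = 2 * sqrt (mixed_product d D f0 g0 0)"
        using f case_f by (simp add: c_star_inf_def c_f_def mixed_product_def)
    qed (use f assms mixed_product_le_left_endpoint in \<open>auto simp: mixed_product_def\<close>)
  next
    case g
    show thesis
    proof (rule that[of 1])
      show "c_star_inf d D f0 g0 = 2 * sqrt (mixed_product d D f0 g0 1)"
        using g case_f case_g by (simp add: c_star_inf_def c_g_def mixed_product_def)
      fix t :: real assume "t \<in> {0..1}"
      then show "mixed_product d D f0 g0 t \<le> mixed_product d D f0 g0 1"
        using g assms mixed_product_le_left_endpoint[of D d g0 f0 "1 - t"]
        by (simp add: mixed_product_swap[of d D f0 g0 t] mixed_product_def algebra_simps)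
    qed simp
  next
    case mixed
    define w where "w = (D - d) * (f0 - g0)"
    note max = mixed_product_interior_max[OF mixed, folded w_def]
    have "\<bar>D * f0 - d * g0\<bar> / sqrt w = 2 * sqrt ((D * f0 - d * g0)\<^sup>2 / (4 * w))"
      using max(1) by (simp add: real_sqrt_divide real_sqrt_mult)
    then have "c_star_inf d D f0 g0 = 2 * sqrt ((D * f0 - d * g0)\<^sup>2 / (4 * w))"
      using mixed case_f case_g by (simp add: c_star_inf_def w_def)
    with max show thesis
      by (intro that[of "(D * f0 + d * g0 - 2 * d * f0) / (2 * w)"]) simp_all
  qed
qed

lemma c_star_inf_eq_SUP:
  assumes "d > 0" "D > 0" "f0 > 0" "g0 > 0"
  shows "c_star_inf d D f0 g0 = 2 * sqrt (SUP t\<in>{0..1}. mixed_product d D f0 g0 t)"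
proof -
  obtain t0 where t0: "t0 \<in> {0..1}" "c_star_inf d D f0 g0 = 2 * sqrt (mixed_product d D f0 g0 t0)"
    and max: "\<And>t. t \<in> {0..1} \<Longrightarrow> mixed_product d D f0 g0 t \<le> mixed_product d D f0 g0 t0"
    using c_star_inf_attains_max[OF assms] by blast
  have "(SUP t\<in>{0..1}. mixed_product d D f0 g0 t) = mixed_product d D f0 g0 t0"
    using t0(1) max by (intro cSup_eq_maximum) auto
  with t0(2) show ?thesis by simp
qed

lemma c_star_inf_ge_max_c_f_c_g:
  assumes "d > 0" "D > 0" "f0 > 0" "g0 > 0"
  shows "max (c_f d f0) (c_g D g0) \<le> c_star_inf d D f0 g0"
proof -
  obtain t0 where "c_star_inf d D f0 g0 = 2 * sqrt (mixed_product d D f0 g0 t0)"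
    and max: "\<And>t. t \<in> {0..1} \<Longrightarrow> mixed_product d D f0 g0 t \<le> mixed_product d D f0 g0 t0"
    using c_star_inf_attains_max[OF assms] by blast
  moreover have "d * f0 \<le> mixed_product d D f0 g0 t0" "D * g0 \<le> mixed_product d D f0 g0 t0"
    using max[of 0] max[of 1] by (simp_all add: mixed_product_def)
  ultimately show ?thesis
    by (simp add: c_f_def c_g_def)
qed

lemma c_star_inf_le_upper:
  assumes "d > 0" "D > 0" "f0 > 0" "g0 > 0"
  shows "c_star_inf d D f0 g0 \<le> 2 * sqrt (max D d * max g0 f0)"
proof -
  obtain t0 where "t0 \<in> {0..1}" "c_star_inf d D f0 g0 = 2 * sqrt (mixed_product d D f0 g0 t0)"
    using c_star_inf_attains_max[OF assms] by blast
  with assms mixed_product_le_max[of d D f0 g0 t0] show ?thesis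
    by simp
qed

lemma c_star_inf_less_upper_iff:
  assumes "d > 0" "D > 0" "f0 > 0" "g0 > 0"
  shows "c_star_inf d D f0 g0 < 2 * sqrt (max D d * max g0 f0)
    \<longleftrightarrow> (D > d \<and> f0 > g0) \<or> (D < d \<and> f0 < g0)"
proof -
  obtain t0 where t0: "t0 \<in> {0..1}" "c_star_inf d D f0 g0 = 2 * sqrt (mixed_product d D f0 g0 t0)"
    and max: "\<And>t. t \<in> {0..1} \<Longrightarrow> mixed_product d D f0 g0 t \<le> mixed_product d D f0 g0 t0"
    using c_star_inf_attains_max[OF assms] by blast
  have "mixed_product d D f0 g0 t0 < max D d * max g0 f0
    \<longleftrightarrow> (D > d \<and> f0 > g0) \<or> (D < d \<and> f0 < g0)"
  proof
    assume less: "mixed_product d D f0 g0 t0 < max D d * max g0 f0"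
    show "(D > d \<and> f0 > g0) \<or> (D < d \<and> f0 < g0)"
    proof (rule ccontr)
      assume "\<not> ((D > d \<and> f0 > g0) \<or> (D < d \<and> f0 < g0))"
      then have "max D d * max g0 f0 = d * f0 \<or> max D d * max g0 f0 = D * g0"
        by (auto simp: max_def)
      with less max[of 0] max[of 1] show False
        by (auto simp: mixed_product_def)
    qed
  next
    assume "(D > d \<and> f0 > g0) \<or> (D < d \<and> f0 < g0)"
    then show "mixed_product d D f0 g0 t0 < max D d * max g0 f0"
    proof
      assume "D > d \<and> f0 > g0"
      with assms t0(1) mixed_product_less_max[of d D g0 f0 t0] show ?thesis
        by simp
    next
      assume "D < d \<and> f0 < g0"
      with assms t0(1) mixed_product_less_max[of D d f0 g0 "1 - t0"] show ?thesis
        by (simp add: mixed_product_swap[of d D f0 g0 t0])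
    qed
  qed
  with t0(2) show ?thesis
    by simp
qed

lemma mono_on_c_star_inf:
  assumes "d > 0" "f0 > 0" "g0 > 0"
  shows "mono_on {0<..} (\<lambda>D. c_star_inf d D f0 g0)"
proof (rule mono_onI)
  fix D1 D2 :: real
  assume "D1 \<in> {0<..}" "D2 \<in> {0<..}" "D1 \<le> D2"
  then have pos: "D1 > 0" "D2 > 0" and "D1 \<le> D2" by auto
  obtain t1 where t1: "t1 \<in> {0..1}" "c_star_inf d D1 f0 g0 = 2 * sqrt (mixed_product d D1 f0 g0 t1)"
    using c_star_inf_attains_max[OF assms(1) pos(1) assms(2,3)] by blast
  obtain t2 where "c_star_inf d D2 f0 g0 = 2 * sqrt (mixed_product d D2 f0 g0 t2)"
    and max2: "\<And>t. t \<in> {0..1} \<Longrightarrow> mixed_product d D2 f0 g0 t \<le> mixed_product d D2 f0 g0 t2"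
    using c_star_inf_attains_max[OF assms(1) pos(2) assms(2,3)] by blast
  moreover have "mixed_product d D1 f0 g0 t1 \<le> mixed_product d D2 f0 g0 t1"
    unfolding mixed_product_def using t1(1) assms \<open>D1 \<le> D2\<close>
    by (intro mult_right_mono add_left_mono mult_left_mono add_nonneg_nonneg mult_nonneg_nonneg) auto
  ultimately show "c_star_inf d D1 f0 g0 \<le> c_star_inf d D2 f0 g0"
    using t1(2) max2[OF t1(1)] by simp
qed

lemma continuous_on_c_star_inf:
  "continuous_on {p :: real \<times> real \<times> real \<times> real.
      fst p > 0 \<and> fst (snd p) > 0 \<and> fst (snd (snd p)) > 0 \<and> snd (snd (snd p)) > 0}
    (\<lambda>(d, D, f0, g0). c_star_inf d D f0 g0)"
  (is "continuous_on ?S _")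
proof -
  define m where "m p t = mixed_product (fst p) (fst (snd p)) (fst (snd (snd p))) (snd (snd (snd p))) t"
    for p :: "real \<times> real \<times> real \<times> real" and t :: real
  have "open ?S"
    by (intro open_Collect_conj open_Collect_less continuous_intros)
  moreover have "continuous_on (?S \<times> {0..1}) (\<lambda>(p, t). m p t)"
    unfolding m_def mixed_product_def case_prod_unfold by (intro continuous_intros)
  ultimately have "continuous_on ?S (\<lambda>p. 2 * sqrt (SUP t\<in>{0..1}. m p t))"
    by (intro continuous_intros continuous_on_SUP_compact) auto
  then show ?thesis
    by (rule continuous_on_eq) (auto simp: m_def c_star_inf_eq_SUP)
qed

lemma c_star_inf_over_sqrt_tendsto:
  assumes "d > 0" "f0 > 0" "g0 > 0"
  shows "(SUP t\<in>{0..1}. t * ((1 - t) * f0 + t * g0)) > 0"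
    and "((\<lambda>D. c_star_inf d D f0 g0 / sqrt D)
      \<longlongrightarrow> 2 * sqrt (SUP t\<in>{0..1}. t * ((1 - t) * f0 + t * g0))) at_top"
proof -
  define q where "q t = t * ((1 - t) * f0 + t * g0)" for t :: real
  obtain s where s: "s \<in> {0..1}" and q_max: "\<And>t. t \<in> {0..1} \<Longrightarrow> q t \<le> q s"
  proof -
    have "continuous_on {0..1} q"
      unfolding q_def by (intro continuous_intros)
    then show thesis
      using continuous_attains_sup[of "{0..1}" q] that by auto
  qed
  have SUP_q: "(SUP t\<in>{0..1}. t * ((1 - t) * f0 + t * g0)) = q s"
    using s q_max unfolding q_def[symmetric] by (intro cSup_eq_maximum) auto
  show "(SUP t\<in>{0..1}. t * ((1 - t) * f0 + t * g0)) > 0"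
    using q_max[of 1] assms by (simp add: SUP_q q_def)
  define m where "m D = (c_star_inf d D f0 g0 / 2)\<^sup>2 / D" for D
  have bounds: "q s \<le> m D \<and> m D \<le> q s + d * (f0 + g0) / D" if D: "D > 0" for D
  proof -
    obtain t0 where t0: "t0 \<in> {0..1}" "c_star_inf d D f0 g0 = 2 * sqrt (mixed_product d D f0 g0 t0)"
      and max: "\<And>t. t \<in> {0..1} \<Longrightarrow> mixed_product d D f0 g0 t \<le> mixed_product d D f0 g0 t0"
      using c_star_inf_attains_max[OF assms(1) D assms(2,3)] by blast
    have split: "mixed_product d D f0 g0 t = D * q t + d * ((1 - t) * ((1 - t) * f0 + t * g0))" for t
      by (simp add: mixed_product_def q_def algebra_simps)
    have rest: "0 \<le> (1 - t) * ((1 - t) * f0 + t * g0)" "(1 - t) * ((1 - t) * f0 + t * g0) \<le> f0 + g0"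
      if "t \<in> {0..1}" for t
      using that assms by (auto intro!: mult_nonneg_nonneg add_nonneg_nonneg mult_le_one
          order.trans[OF mult_left_le_one_le] add_mono)
    have "D * m D = mixed_product d D f0 g0 t0"
      using t0(2) assms D mixed_product_nonneg[OF _ _ _ _ t0(1), of d D f0 g0]
      by (simp add: m_def)
    moreover have "D * q s \<le> mixed_product d D f0 g0 t0"
      using max[OF s] split[of s] rest(1)[OF s] assms by (smt (verit) mult_nonneg_nonneg)
    moreover have "mixed_product d D f0 g0 t0 \<le> D * q s + d * (f0 + g0)"
      using split[of t0] q_max[OF t0(1)] rest(2)[OF t0(1)] assms D
      by (smt (verit) mult_left_mono)
    moreover have "m D \<le> q s + d * (f0 + g0) / D \<longleftrightarrow> D * m D \<le> D * q s + d * (f0 + g0)"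
      using D by (simp add: field_simps)
    ultimately show ?thesis
      using mult_le_cancel_left_pos[OF D, of "q s" "m D"] by linarith
  qed
  have eventually_bounds: "\<forall>\<^sub>F D in at_top. q s \<le> m D \<and> m D \<le> q s + d * (f0 + g0) / D"
    using eventually_gt_at_top[of "0::real"] by (rule eventually_mono) (rule bounds)
  have "(m \<longlongrightarrow> q s) at_top"
  proof (rule tendsto_sandwich)
    show "\<forall>\<^sub>F D in at_top. q s \<le> m D" "\<forall>\<^sub>F D in at_top. m D \<le> q s + d * (f0 + g0) / D"
      using eventually_bounds by (auto elim: eventually_mono)
    have "((\<lambda>D. q s + d * (f0 + g0) / D) \<longlongrightarrow> q s + 0) at_top"
      by (intro tendsto_add tendsto_const tendsto_divide_0[OF tendsto_const]
          filterlim_at_top_imp_at_infinity filterlim_ident)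
    then show "((\<lambda>D. q s + d * (f0 + g0) / D) \<longlongrightarrow> q s) at_top"
      by simp
  qed simp
  then have "((\<lambda>D. 2 * sqrt (m D)) \<longlongrightarrow> 2 * sqrt (q s)) at_top"
    by (intro tendsto_intros)
  moreover have "\<forall>\<^sub>F D in at_top. 2 * sqrt (m D) = c_star_inf d D f0 g0 / sqrt D"
    using eventually_gt_at_top[of "0::real"]
  proof (rule eventually_mono)
    fix D :: real assume "D > 0"
    have "0 \<le> c_f d f0"
      using assms by (simp add: c_f_def)
    also have "c_f d f0 \<le> c_star_inf d D f0 g0"
      using c_star_inf_ge_max_c_f_c_g[OF assms(1) \<open>D > 0\<close> assms(2,3)] by simp
    finally have "c_star_inf d D f0 g0 \<ge> 0" .
    then show "2 * sqrt (m D) = c_star_inf d D f0 g0 / sqrt D"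
      by (simp add: m_def real_sqrt_divide)
  qed
  ultimately show "((\<lambda>D. c_star_inf d D f0 g0 / sqrt D)
      \<longlongrightarrow> 2 * sqrt (SUP t\<in>{0..1}. t * ((1 - t) * f0 + t * g0))) at_top"
    unfolding SUP_q by (rule Lim_transform_eventually)
qed

theorem proposition2p9:
  fixes d D f0 g0 :: real
  assumes "d > 0" and "D > 0" and "f0 > 0" and "g0 > 0"
  shows
    "max (c_f d f0) (c_g D g0) \<le> c_star_inf d D f0 g0
     \<and> c_star_inf d D f0 g0 \<le> 2 * sqrt (max D d * max g0 f0)
     \<and> (c_star_inf d D f0 g0 < 2 * sqrt (max D d * max g0 f0) \<longleftrightarrow>
          ((D > d \<and> f0 > g0) \<or> (D < d \<and> f0 < g0)))
     \<and> continuous_on {p :: real \<times> real \<times> real \<times> real.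
            fst p > 0 \<and> fst (snd p) > 0 \<and> fst (snd (snd p)) > 0 \<and> snd (snd (snd p)) > 0}
          (\<lambda>(d', D', a, b). c_star_inf d' D' a b)
     \<and> mono_on {0<..} (\<lambda>D'. c_star_inf d D' f0 g0)
     \<and> (\<exists>L>0. ((\<lambda>D'. c_star_inf d D' f0 g0 / sqrt D') \<longlongrightarrow> L) at_top)"
proof -
  have "\<exists>L>0. ((\<lambda>D'. c_star_inf d D' f0 g0 / sqrt D') \<longlongrightarrow> L) at_top"
    using c_star_inf_over_sqrt_tendsto[OF assms(1,3,4)] by (intro exI conjI) auto
  with c_star_inf_ge_max_c_f_c_g[OF assms] c_star_inf_le_upper[OF assms]
    c_star_inf_less_upper_iff[OF assms] continuous_on_c_star_inf mono_on_c_star_inf[OF assms(1,3,4)]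
  show ?thesis
    by (intro conjI)
qed

end
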